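(* Let $N\ge 2$, $0<k\le N$, and $\mathfrak D_0(N,k)=\mathfrak D(N,k)\cap\mathfrak{su}(N)$, where $\mathfrak D(N,k)$ is the set of skew-Hermitian $N\times N$ complex matrices $A$ with $A_{ij}=0$ unless $k$ divides $i-j$. Then the discrete Laplacian $\Delta_N$ restricts to a vector space automorphism (linear bijection) of $\mathfrak D_0(N,k)$. Consequently the quantized Euler equations $\dot W=[\Delta_N^{-1}W,W]_N$ on $\mathfrak{su}(N)$ restrict to $\mathfrak D_0(N,k)$: the vector field $W\mapsto[\Delta_N^{-1}W,W]_N$ maps $\mathfrak D_0(N,k)$ into itself.
   Context: $\mathfrak{su}(N)$ is the Lie algebra of traceless skew-Hermitian $N\times N$ matrices, and $[A,B]_N=N^{3/2}(AB-BA)$. Let $\varrho$ be the irreducible $N$-dimensional representation of $\mathfrak{su}(2)$ by skew-Hermitian matrices and $X_1,X_2,X_3$ a basis of $\mathfrak{su}(2)$ orthonormal with respect to a non-degenerate ad-invariant bilinear form; the discrete Laplacian is $\Delta_N(Y)=\sum_{i=1}^3[\varrho(X_i),[\varrho(X_i),Y]]$, which is invertible on $\mathfrak{su}(N)$, and $\Delta_N^{-1}$ denotes its inverse there. *)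

theory Defs
  imports "Jordan_Normal_Form.Matrix"
begin

text \<open>Square complex matrices of size N are elements of carrier_mat N N;
  indices run over 0..N-1 (the condition "k divides i - j" is shift invariant).\<close>

definition skew_herm :: "nat \<Rightarrow> complex mat \<Rightarrow> bool" where
  "skew_herm N A \<longleftrightarrow> A \<in> carrier_mat N N \<and>
     (\<forall>i<N. \<forall>j<N. A $$ (i,j) = - cnj (A $$ (j,i)))"

definition mat_trace :: "nat \<Rightarrow> complex mat \<Rightarrow> complex" where
  "mat_trace N A = (\<Sum>i<N. A $$ (i,i))"

definition su :: "nat \<Rightarrow> complex mat set" where
  "su N = {A. skew_herm N A \<and> mat_trace N A = 0}"

definition DD :: "nat \<Rightarrow> nat \<Rightarrow> complex mat set" where
  "DD N k = {A. skew_herm N A \<and>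
     (\<forall>i<N. \<forall>j<N. \<not> (int k dvd (int i - int j)) \<longrightarrow> A $$ (i,j) = 0)}"

definition DD0 :: "nat \<Rightarrow> nat \<Rightarrow> complex mat set" where
  "DD0 N k = DD N k \<inter> su N"

definition brN :: "nat \<Rightarrow> complex mat \<Rightarrow> complex mat \<Rightarrow> complex mat" where
  "brN N A B = complex_of_real (real N powr (3/2)) \<cdot>\<^sub>m (A * B - B * A)"

definition comm :: "complex mat \<Rightarrow> complex mat \<Rightarrow> complex mat" where
  "comm A B = A * B - B * A"

text \<open>The irreducible N-dimensional (spin s = (N-1)/2) representation of su(2) in the
  standard weight basis e_0,...,e_{N-1}, with weights m_i = s - i.
  J3 = diag(m_i), J+ e_i = sqrt(s(s+1) - m_i(m_i+1)) e_{i-1},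
  J1 = (J+ + J-)/2, J2 = (J+ - J-)/(2i), and rho(X_a) = -i J_a, which satisfies
  [rho X1, rho X2] = rho X3 (cyclically).\<close>
definition spin_s :: "nat \<Rightarrow> real" where
  "spin_s N = (real N - 1) / 2"

definition weight :: "nat \<Rightarrow> nat \<Rightarrow> real" where
  "weight N i = spin_s N - real i"

definition Jplus :: "nat \<Rightarrow> complex mat" where
  "Jplus N = mat N N (\<lambda>(i,j). if j = i + 1 then
      complex_of_real (sqrt (spin_s N * (spin_s N + 1) - weight N j * (weight N j + 1)))
    else 0)"

definition Jminus :: "nat \<Rightarrow> complex mat" where
  "Jminus N = mat N N (\<lambda>(i,j). cnj (Jplus N $$ (j,i)))"

definition J3 :: "nat \<Rightarrow> complex mat" where
  "J3 N = mat N N (\<lambda>(i,j). if i = j then complex_of_real (weight N i) else 0)"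

definition J1 :: "nat \<Rightarrow> complex mat" where
  "J1 N = (1/2 :: complex) \<cdot>\<^sub>m (Jplus N + Jminus N)"

definition J2 :: "nat \<Rightarrow> complex mat" where
  "J2 N = (1/(2*\<i>) :: complex) \<cdot>\<^sub>m (Jplus N - Jminus N)"

definition rho :: "nat \<Rightarrow> nat \<Rightarrow> complex mat" where
  "rho N a = (- \<i>) \<cdot>\<^sub>m (if a = 1 then J1 N else if a = 2 then J2 N else J3 N)"

definition Lap :: "nat \<Rightarrow> complex mat \<Rightarrow> complex mat" where
  "Lap N Y = comm (rho N 1) (comm (rho N 1) Y) + comm (rho N 2) (comm (rho N 2) Y)
           + comm (rho N 3) (comm (rho N 3) Y)"

definition LapInv :: "nat \<Rightarrow> complex mat \<Rightarrow> complex mat" where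
  "LapInv N W = (THE Y. Y \<in> su N \<and> Lap N Y = W)"

end

theory Submission
  imports Defs "HOL-Library.Function_Algebras"
begin

text \<open>
  Write \<open>\<Omega> = \<Sum>\<^sub>a \<rho>(X\<^sub>a) \<otimes> \<rho>(X\<^sub>a)\<close> for the split Casimir. Expanding the double
  commutators, every entry \<open>(\<Delta>\<^sub>N Y)\<^sub>i\<^sub>j\<close> is a combination of entries \<open>Y\<^sub>p\<^sub>q\<close> with coefficients
  from \<open>\<Omega>\<close>, and \<open>\<Omega>\<close> has weight zero (it only involves \<open>J\<^sub>+ \<otimes> J\<^sub>-\<close>, \<open>J\<^sub>- \<otimes> J\<^sub>+\<close> and
  \<open>J\<^sub>3 \<otimes> J\<^sub>3\<close>), which forces \<open>p - q = i - j\<close>. Hence \<open>\<Delta>\<^sub>N\<close> preserves the support condition of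
  \<open>D(N,k)\<close>; it obviously preserves skew-Hermitian and traceless matrices.

  On traceless matrices \<open>\<Delta>\<^sub>N\<close> is injective: for the Frobenius inner product,
  \<open>\<langle>Y, \<Delta>\<^sub>N Y\<rangle> = - \<Sum>\<^sub>a \<parallel>[\<rho>(X\<^sub>a), Y]\<parallel>\<^sup>2\<close>, so a kernel element commutes with \<open>\<rho>(X\<^sub>3)\<close>, which
  is diagonal with distinct entries, and with \<open>\<rho>(X\<^sub>1)\<close>, whose nonzero superdiagonal links
  consecutive diagonal entries; it is therefore scalar, and zero since it is traceless.
  An injective real-linear endomorphism of the finite-dimensional space \<open>D\<^sub>0(N,k)\<close> is onto, so
  \<open>\<Delta>\<^sub>N\<^sup>-\<^sup>1\<close> maps \<open>D\<^sub>0(N,k)\<close> into itself, and \<open>D\<^sub>0(N,k)\<close> is closed under commutators.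
\<close>

section \<open>Commutators, skew-Hermitian matrices and traces\<close>

lemma sum_eq_single:
  "finite A \<Longrightarrow> a \<in> A \<Longrightarrow> (\<And>x. x \<in> A \<Longrightarrow> x \<noteq> a \<Longrightarrow> f x = 0) \<Longrightarrow> sum f A = f a"
  by (simp add: sum.remove sum.neutral)

lemma comm_carrier [simp]:
  "A \<in> carrier_mat N N \<Longrightarrow> B \<in> carrier_mat N N \<Longrightarrow> comm A B \<in> carrier_mat N N"
  unfolding comm_def by auto

lemma dim_comm [simp]: "dim_row (comm A B) = dim_row B" "dim_col (comm A B) = dim_col A"
  by (simp_all add: comm_def)

lemma comm_add_right:
  assumes "K \<in> carrier_mat N N" "A \<in> carrier_mat N N" "B \<in> carrier_mat N N"
  shows "comm K (A + B) = comm K A + comm K B"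
  using assms
  by (intro eq_matI)
    (auto simp: comm_def mult_add_distrib_mat[OF assms] add_mult_distrib_mat[OF assms(2,3,1)])

lemma comm_diff_right:
  assumes "K \<in> carrier_mat N N" "A \<in> carrier_mat N N" "B \<in> carrier_mat N N"
  shows "comm K (A - B) = comm K A - comm K B"
  using assms
  by (intro eq_matI)
    (auto simp: comm_def mult_minus_distrib_mat[OF assms] minus_mult_distrib_mat[OF assms(2,3,1)])

lemma comm_smult_right:
  assumes "K \<in> carrier_mat N N" "A \<in> carrier_mat N N"
  shows "comm K (c \<cdot>\<^sub>m A) = c \<cdot>\<^sub>m comm K A"
  using assms
  by (intro eq_matI)
    (auto simp: comm_def mult_smult_distrib[OF assms] mult_smult_assoc_mat[OF assms(2,1)] algebra_simps)

lemma index_comm: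
  assumes "A \<in> carrier_mat N N" "B \<in> carrier_mat N N" "i < N" "j < N"
  shows "comm A B $$ (i,j) = (\<Sum>l<N. A $$ (i,l) * B $$ (l,j) - B $$ (i,l) * A $$ (l,j))"
  using assms by (simp add: comm_def scalar_prod_def sum_subtractf atLeast0LessThan)

lemma index_comm_comm:
  assumes "K \<in> carrier_mat N N" "Y \<in> carrier_mat N N" "i < N" "j < N"
  shows "comm K (comm K Y) $$ (i,j) = (\<Sum>l<N. \<Sum>m<N.
      K $$ (i,l) * K $$ (l,m) * Y $$ (m,j) - K $$ (i,l) * Y $$ (l,m) * K $$ (m,j)
    - K $$ (i,m) * Y $$ (m,l) * K $$ (l,j) + Y $$ (i,m) * K $$ (m,l) * K $$ (l,j))"
proof -
  have "comm K (comm K Y) $$ (i,j)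
      = (\<Sum>l<N. K $$ (i,l) * comm K Y $$ (l,j) - comm K Y $$ (i,l) * K $$ (l,j))"
    using assms by (simp add: index_comm)
  also have "\<dots> = (\<Sum>l<N. \<Sum>m<N.
      K $$ (i,l) * K $$ (l,m) * Y $$ (m,j) - K $$ (i,l) * Y $$ (l,m) * K $$ (m,j)
    - K $$ (i,m) * Y $$ (m,l) * K $$ (l,j) + Y $$ (i,m) * K $$ (m,l) * K $$ (l,j))"
    using assms
    by (intro sum.cong refl)
      (simp add: index_comm sum_distrib_left sum_distrib_right algebra_simps flip: sum_subtractf sum.distrib)
  finally show ?thesis .
qed

lemma index_comm_diagonal_left:
  assumes "K \<in> carrier_mat N N" "Y \<in> carrier_mat N N" "diagonal_mat K" "i < N" "j < N"
  shows "comm K Y $$ (i,j) = (K $$ (i,i) - K $$ (j,j)) * Y $$ (i,j)"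
proof -
  have "(\<Sum>l<N. K $$ (i,l) * Y $$ (l,j)) = K $$ (i,i) * Y $$ (i,j)"
    "(\<Sum>l<N. Y $$ (i,l) * K $$ (l,j)) = Y $$ (i,j) * K $$ (j,j)"
    using assms by (auto intro!: sum_eq_single simp: diagonal_mat_def)
  then show ?thesis
    using assms by (simp add: index_comm sum_subtractf algebra_simps)
qed

lemma index_comm_diagonal_right:
  assumes "K \<in> carrier_mat N N" "Y \<in> carrier_mat N N" "diagonal_mat Y" "i < N" "j < N"
  shows "comm K Y $$ (i,j) = K $$ (i,j) * (Y $$ (j,j) - Y $$ (i,i))"
proof -
  have "(\<Sum>l<N. K $$ (i,l) * Y $$ (l,j)) = K $$ (i,j) * Y $$ (j,j)"
    "(\<Sum>l<N. Y $$ (i,l) * K $$ (l,j)) = Y $$ (i,i) * K $$ (i,j)"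
    using assms by (auto intro!: sum_eq_single simp: diagonal_mat_def)
  then show ?thesis
    using assms by (simp add: index_comm sum_subtractf algebra_simps)
qed

lemma skew_hermI:
  assumes "A \<in> carrier_mat N N" "\<And>i j. i < N \<Longrightarrow> j < N \<Longrightarrow> cnj (A $$ (j,i)) = - A $$ (i,j)"
  shows "skew_herm N A"
  using assms by (simp add: skew_herm_def)

lemma skew_herm_carrier: "skew_herm N A \<Longrightarrow> A \<in> carrier_mat N N"
  unfolding skew_herm_def by simp

lemma skew_herm_cnj_index:
  "skew_herm N A \<Longrightarrow> i < N \<Longrightarrow> j < N \<Longrightarrow> cnj (A $$ (j,i)) = - A $$ (i,j)"
  unfolding skew_herm_def by (metis complex_cnj_minus minus_minus)

lemma skew_herm_add:
  assumes "skew_herm N A" "skew_herm N B"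
  shows "skew_herm N (A + B)"
  using assms skew_herm_carrier[OF assms(1)] skew_herm_carrier[OF assms(2)]
  by (auto intro!: skew_hermI simp: skew_herm_cnj_index)

lemma skew_herm_smult_real:
  assumes "skew_herm N A"
  shows "skew_herm N (complex_of_real r \<cdot>\<^sub>m A)"
  using assms skew_herm_carrier[OF assms]
  by (auto intro!: skew_hermI simp: skew_herm_cnj_index)

lemma skew_herm_comm:
  assumes K: "skew_herm N K" and Y: "skew_herm N Y"
  shows "skew_herm N (comm K Y)"
proof (rule skew_hermI)
  have KY: "K \<in> carrier_mat N N" "Y \<in> carrier_mat N N"
    using K Y by (simp_all add: skew_herm_carrier)
  then show "comm K Y \<in> carrier_mat N N" by simp
  fix i j assume ij: "i < N" "j < N"
  have "cnj (comm K Y $$ (j,i)) = (\<Sum>l<N. Y $$ (i,l) * K $$ (l,j) - K $$ (i,l) * Y $$ (l,j))"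
    using K Y KY ij by (simp add: index_comm skew_herm_cnj_index mult.commute)
  then show "cnj (comm K Y $$ (j,i)) = - comm K Y $$ (i,j)"
    using KY ij by (simp add: index_comm sum_subtractf)
qed

lemma mat_trace_add:
  "A \<in> carrier_mat N N \<Longrightarrow> B \<in> carrier_mat N N \<Longrightarrow> mat_trace N (A + B) = mat_trace N A + mat_trace N B"
  unfolding mat_trace_def by (simp add: sum.distrib)

lemma mat_trace_diff:
  "A \<in> carrier_mat N N \<Longrightarrow> B \<in> carrier_mat N N \<Longrightarrow> mat_trace N (A - B) = mat_trace N A - mat_trace N B"
  unfolding mat_trace_def by (simp add: sum_subtractf)

lemma mat_trace_smult: "A \<in> carrier_mat N N \<Longrightarrow> mat_trace N (c \<cdot>\<^sub>m A) = c * mat_trace N A"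
  unfolding mat_trace_def by (simp add: sum_distrib_left)

lemma mat_trace_comm:
  assumes "A \<in> carrier_mat N N" "B \<in> carrier_mat N N"
  shows "mat_trace N (comm A B) = 0"
proof -
  have "(\<Sum>i<N. \<Sum>l<N. B $$ (i,l) * A $$ (l,i)) = (\<Sum>l<N. \<Sum>i<N. A $$ (l,i) * B $$ (i,l))"
    by (subst sum.swap) (simp add: mult.commute)
  then show ?thesis
    using assms by (simp add: mat_trace_def index_comm sum_subtractf)
qed

section \<open>The space \<open>D\<^sub>0(N,k)\<close>\<close>

definition supported_mod :: "nat \<Rightarrow> nat \<Rightarrow> complex mat \<Rightarrow> bool" where
  "supported_mod N k A \<longleftrightarrow>
     (\<forall>i<N. \<forall>j<N. \<not> int k dvd int i - int j \<longrightarrow> A $$ (i,j) = 0)"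

lemma DD0_iff: "A \<in> DD0 N k \<longleftrightarrow> skew_herm N A \<and> supported_mod N k A \<and> mat_trace N A = 0"
  unfolding DD0_def DD_def su_def supported_mod_def by auto

lemma supported_mod_add:
  "A \<in> carrier_mat N N \<Longrightarrow> B \<in> carrier_mat N N \<Longrightarrow> supported_mod N k A \<Longrightarrow> supported_mod N k B
    \<Longrightarrow> supported_mod N k (A + B)"
  unfolding supported_mod_def by auto

lemma supported_mod_smult:
  "A \<in> carrier_mat N N \<Longrightarrow> supported_mod N k A \<Longrightarrow> supported_mod N k (c \<cdot>\<^sub>m A)"
  unfolding supported_mod_def by auto

lemma supported_mod_comm:
  assumes A: "A \<in> carrier_mat N N" and B: "B \<in> carrier_mat N N"
    and "supported_mod N k A" "supported_mod N k B"
  shows "supported_mod N k (comm A B)"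
  unfolding supported_mod_def
proof (intro allI impI)
  fix i j assume ij: "i < N" "j < N" and ndvd: "\<not> int k dvd int i - int j"
  have zero: "A $$ (p,q) = 0" "B $$ (p,q) = 0" if "p < N" "q < N" "\<not> int k dvd int p - int q" for p q
    using assms that unfolding supported_mod_def by auto
  have "A $$ (i,l) * B $$ (l,j) - B $$ (i,l) * A $$ (l,j) = 0" if l: "l < N" for l
  proof (cases "int k dvd int i - int l")
    case True
    then have "\<not> int k dvd int l - int j"
      using ndvd dvd_add[of "int k" "int i - int l" "int l - int j"] by auto
    then show ?thesis using zero ij l by simp
  next
    case False
    then show ?thesis using zero ij l by simp
  qed
  then show "comm A B $$ (i,j) = 0"
    using A B ij by (simp add: index_comm)
qed

lemma DD0_carrier: "DD0 N k \<subseteq> carrier_mat N N"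
  by (auto simp: DD0_iff skew_herm_carrier)

lemma DD0_add: "A \<in> DD0 N k \<Longrightarrow> B \<in> DD0 N k \<Longrightarrow> A + B \<in> DD0 N k"
  by (simp add: DD0_iff skew_herm_add supported_mod_add mat_trace_add skew_herm_carrier)

lemma DD0_smult_real: "A \<in> DD0 N k \<Longrightarrow> complex_of_real r \<cdot>\<^sub>m A \<in> DD0 N k"
  by (simp add: DD0_iff skew_herm_smult_real supported_mod_smult mat_trace_smult skew_herm_carrier)

lemma DD0_comm: "A \<in> DD0 N k \<Longrightarrow> B \<in> DD0 N k \<Longrightarrow> comm A B \<in> DD0 N k"
  by (simp add: DD0_iff skew_herm_comm supported_mod_comm mat_trace_comm skew_herm_carrier)

lemma zero_DD0: "0\<^sub>m N N \<in> DD0 N k"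
  by (simp add: DD0_iff skew_herm_def supported_mod_def mat_trace_def)

section \<open>The spin representation and its split Casimir\<close>

definition ladder_coeff :: "nat \<Rightarrow> nat \<Rightarrow> complex" where
  "ladder_coeff N j =
     complex_of_real (sqrt (spin_s N * (spin_s N + 1) - weight N j * (weight N j + 1)))"

lemma cnj_ladder_coeff [simp]: "cnj (ladder_coeff N j) = ladder_coeff N j"
  by (simp add: ladder_coeff_def)

lemma ladder_coeff_nonzero:
  assumes "0 < j" "j < N"
  shows "ladder_coeff N j \<noteq> 0"
proof -
  have "spin_s N * (spin_s N + 1) - weight N j * (weight N j + 1) = real j * (real N - real j)"
    by (simp add: spin_s_def weight_def field_simps)
  also have "\<dots> > 0"
    using assms by simp
  finally show ?thesis
    by (simp add: ladder_coeff_def)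
qed

lemma index_Jplus:
  "i < N \<Longrightarrow> j < N \<Longrightarrow> Jplus N $$ (i,j) = (if j = i + 1 then ladder_coeff N j else 0)"
  by (simp add: Jplus_def ladder_coeff_def)

lemma index_Jminus:
  "i < N \<Longrightarrow> j < N \<Longrightarrow> Jminus N $$ (i,j) = (if i = j + 1 then ladder_coeff N i else 0)"
  by (simp add: Jminus_def Jplus_def ladder_coeff_def)

lemma index_J3:
  "i < N \<Longrightarrow> j < N \<Longrightarrow> J3 N $$ (i,j) = (if i = j then complex_of_real (weight N i) else 0)"
  by (simp add: J3_def)

lemma J_hermitian:
  "i < N \<Longrightarrow> j < N \<Longrightarrow> cnj (Jplus N $$ (j,i)) = Jminus N $$ (i,j)"
  "i < N \<Longrightarrow> j < N \<Longrightarrow> cnj (Jminus N $$ (j,i)) = Jplus N $$ (i,j)"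
  "i < N \<Longrightarrow> j < N \<Longrightarrow> cnj (J3 N $$ (j,i)) = J3 N $$ (i,j)"
  by (simp_all add: index_Jplus index_Jminus index_J3)

lemma rho_carrier [simp]: "rho N a \<in> carrier_mat N N"
proof -
  have "Jplus N \<in> carrier_mat N N" "Jminus N \<in> carrier_mat N N" "J3 N \<in> carrier_mat N N"
    by (simp_all add: Jplus_def Jminus_def J3_def)
  then show ?thesis
    unfolding rho_def J1_def J2_def by auto
qed

lemma dim_rho [simp]: "dim_row (rho N a) = N" "dim_col (rho N a) = N"
  using rho_carrier[of N a] by (simp_all del: rho_carrier)

lemma index_rho1:
  "i < N \<Longrightarrow> j < N \<Longrightarrow> rho N 1 $$ (i,j) = - \<i> * (Jplus N $$ (i,j) + Jminus N $$ (i,j)) / 2"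
  by (simp add: rho_def J1_def Jplus_def Jminus_def)

lemma index_rho2:
  "i < N \<Longrightarrow> j < N \<Longrightarrow> rho N 2 $$ (i,j) = - (Jplus N $$ (i,j) - Jminus N $$ (i,j)) / 2"
  by (simp add: rho_def J2_def Jplus_def Jminus_def field_simps)

lemma index_rho3:
  "i < N \<Longrightarrow> j < N \<Longrightarrow> rho N 3 $$ (i,j) = - \<i> * J3 N $$ (i,j)"
  by (simp add: rho_def J3_def)

lemma rho_other: "a \<noteq> 1 \<Longrightarrow> a \<noteq> 2 \<Longrightarrow> rho N a = rho N 3"
  by (simp add: rho_def)

lemma rho_skew_herm: "skew_herm N (rho N a)"
proof -
  have "skew_herm N (rho N 1)"
    by (intro skew_hermI rho_carrier) (simp add: index_rho1 J_hermitian add.commute del: One_nat_def)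
  moreover have "skew_herm N (rho N 2)"
    by (intro skew_hermI rho_carrier) (simp add: index_rho2 J_hermitian, simp add: field_simps)
  moreover have "skew_herm N (rho N 3)"
    by (intro skew_hermI rho_carrier) (simp add: index_rho3 J_hermitian)
  ultimately show ?thesis
    using rho_other[of a N] by (cases "a = 1 \<or> a = 2") auto
qed

definition split_casimir :: "nat \<Rightarrow> nat \<Rightarrow> nat \<Rightarrow> nat \<Rightarrow> nat \<Rightarrow> complex" where
  "split_casimir N i l m j = rho N 1 $$ (i,l) * rho N 1 $$ (m,j) + rho N 2 $$ (i,l) * rho N 2 $$ (m,j)
     + rho N 3 $$ (i,l) * rho N 3 $$ (m,j)"

text \<open>The \<open>J\<^sub>+ \<otimes> J\<^sub>+\<close> and \<open>J\<^sub>- \<otimes> J\<^sub>-\<close> parts of the \<open>X\<^sub>1\<close> and \<open>X\<^sub>2\<close> terms cancel.\<close>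

lemma split_casimir_ladder:
  assumes "i < N" "l < N" "m < N" "j < N"
  shows "split_casimir N i l m j =
    - (Jplus N $$ (i,l) * Jminus N $$ (m,j) + Jminus N $$ (i,l) * Jplus N $$ (m,j)) / 2
    - J3 N $$ (i,l) * J3 N $$ (m,j)"
  using assms
  by (simp add: split_casimir_def index_rho1 index_rho2 index_rho3 field_simps del: One_nat_def)

lemma split_casimir_weight_balance:
  assumes "i < N" "l < N" "m < N" "j < N" "split_casimir N i l m j \<noteq> 0"
  shows "int l - int i = int m - int j"
  using assms by (auto simp: split_casimir_ladder index_Jplus index_Jminus index_J3 split: if_splits)

section \<open>The discrete Laplacian preserves \<open>D\<^sub>0(N,k)\<close>\<close>

lemma Lap_carrier [simp]: "Y \<in> carrier_mat N N \<Longrightarrow> Lap N Y \<in> carrier_mat N N"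
  by (simp add: Lap_def)

lemma index_Lap:
  assumes Y: "Y \<in> carrier_mat N N" and ij: "i < N" "j < N"
  shows "Lap N Y $$ (i,j) = (\<Sum>l<N. \<Sum>m<N.
      split_casimir N i l l m * Y $$ (m,j) - split_casimir N i l m j * Y $$ (l,m)
    - split_casimir N i m l j * Y $$ (m,l) + Y $$ (i,m) * split_casimir N m l l j)"
proof -
  define G where "G a l m =
      rho N a $$ (i,l) * rho N a $$ (l,m) * Y $$ (m,j) - rho N a $$ (i,l) * Y $$ (l,m) * rho N a $$ (m,j)
    - rho N a $$ (i,m) * Y $$ (m,l) * rho N a $$ (l,j) + Y $$ (i,m) * rho N a $$ (m,l) * rho N a $$ (l,j)"
    for a l m
  have "Lap N Y $$ (i,j) = (\<Sum>l<N. \<Sum>m<N. G 1 l m) + (\<Sum>l<N. \<Sum>m<N. G 2 l m)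
      + (\<Sum>l<N. \<Sum>m<N. G 3 l m)"
    using assms by (simp add: Lap_def G_def index_comm_comm[OF rho_carrier Y ij] del: One_nat_def)
  also have "\<dots> = (\<Sum>l<N. \<Sum>m<N. G 1 l m + G 2 l m + G 3 l m)"
    by (simp add: sum.distrib)
  finally show ?thesis
    by (simp add: G_def split_casimir_def algebra_simps del: One_nat_def)
qed

lemma Lap_add:
  assumes "A \<in> carrier_mat N N" "B \<in> carrier_mat N N"
  shows "Lap N (A + B) = Lap N A + Lap N B"
proof -
  have "comm (rho N a) (comm (rho N a) (A + B))
      = comm (rho N a) (comm (rho N a) A) + comm (rho N a) (comm (rho N a) B)" for a
    using assms by (simp add: comm_add_right[of _ N])
  then show ?thesis
    using assms by (intro eq_matI) (simp_all add: Lap_def)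
qed

lemma Lap_diff:
  assumes "A \<in> carrier_mat N N" "B \<in> carrier_mat N N"
  shows "Lap N (A - B) = Lap N A - Lap N B"
proof -
  have "comm (rho N a) (comm (rho N a) (A - B))
      = comm (rho N a) (comm (rho N a) A) - comm (rho N a) (comm (rho N a) B)" for a
    using assms by (simp add: comm_diff_right[of _ N])
  then show ?thesis
    using assms by (intro eq_matI) (simp_all add: Lap_def)
qed

lemma Lap_smult:
  assumes "A \<in> carrier_mat N N"
  shows "Lap N (c \<cdot>\<^sub>m A) = c \<cdot>\<^sub>m Lap N A"
proof -
  have "comm (rho N a) (comm (rho N a) (c \<cdot>\<^sub>m A)) = c \<cdot>\<^sub>m comm (rho N a) (comm (rho N a) A)" for a
    using assms by (simp add: comm_smult_right[of _ N])
  then show ?thesis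
    using assms by (intro eq_matI) (simp_all add: Lap_def algebra_simps)
qed

lemma skew_herm_Lap: "skew_herm N Y \<Longrightarrow> skew_herm N (Lap N Y)"
  unfolding Lap_def by (intro skew_herm_add skew_herm_comm rho_skew_herm)

lemma mat_trace_Lap: "Y \<in> carrier_mat N N \<Longrightarrow> mat_trace N (Lap N Y) = 0"
  by (simp add: Lap_def mat_trace_add mat_trace_comm)

lemma supported_mod_Lap:
  assumes Y: "Y \<in> carrier_mat N N" and supp: "supported_mod N k Y"
  shows "supported_mod N k (Lap N Y)"
  unfolding supported_mod_def
proof (intro allI impI)
  fix i j assume ij: "i < N" "j < N" and ndvd: "\<not> int k dvd int i - int j"
  have zero: "Y $$ (p,q) = 0" if "p < N" "q < N" "int p - int q = int i - int j" for p q
    using supp that ndvd unfolding supported_mod_def by auto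
  have "split_casimir N i l l m * Y $$ (m,j) - split_casimir N i l m j * Y $$ (l,m)
      - split_casimir N i m l j * Y $$ (m,l) + Y $$ (i,m) * split_casimir N m l l j = 0"
    if lm: "l < N" "m < N" for l m
  proof -
    have t1: "split_casimir N i l l m * Y $$ (m,j) = 0"
      using split_casimir_weight_balance[of i N l l m] zero[of m j] ij lm
      by (cases "split_casimir N i l l m = 0") auto
    have t2: "split_casimir N i l m j * Y $$ (l,m) = 0"
      using split_casimir_weight_balance[of i N l m j] zero[of l m] ij lm
      by (cases "split_casimir N i l m j = 0") auto
    have t3: "split_casimir N i m l j * Y $$ (m,l) = 0"
      using split_casimir_weight_balance[of i N m l j] zero[of m l] ij lm
      by (cases "split_casimir N i m l j = 0") auto
    have t4: "Y $$ (i,m) * split_casimir N m l l j = 0"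
      using split_casimir_weight_balance[of m N l l j] zero[of i m] ij lm
      by (cases "split_casimir N m l l j = 0") auto
    show ?thesis
      unfolding t1 t2 t3 t4 by simp
  qed
  then show "Lap N Y $$ (i,j) = 0"
    using Y ij by (simp add: index_Lap)
qed

lemma Lap_DD0: "A \<in> DD0 N k \<Longrightarrow> Lap N A \<in> DD0 N k"
  by (simp add: DD0_iff skew_herm_Lap supported_mod_Lap mat_trace_Lap skew_herm_carrier)

section \<open>Injectivity on traceless matrices\<close>

definition frob_inner :: "nat \<Rightarrow> complex mat \<Rightarrow> complex mat \<Rightarrow> complex" where
  "frob_inner N A B = (\<Sum>i<N. \<Sum>j<N. cnj (A $$ (i,j)) * B $$ (i,j))"

lemma frob_inner_add_right:
  "B \<in> carrier_mat N N \<Longrightarrow> C \<in> carrier_mat N N \<Longrightarrow>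
    frob_inner N A (B + C) = frob_inner N A B + frob_inner N A C"
  by (simp add: frob_inner_def distrib_left sum.distrib)

lemma frob_inner_diff_left:
  "A \<in> carrier_mat N N \<Longrightarrow> B \<in> carrier_mat N N \<Longrightarrow>
    frob_inner N (A - B) C = frob_inner N A C - frob_inner N B C"
  by (simp add: frob_inner_def left_diff_distrib sum_subtractf)

lemma frob_inner_diff_right:
  "B \<in> carrier_mat N N \<Longrightarrow> C \<in> carrier_mat N N \<Longrightarrow>
    frob_inner N A (B - C) = frob_inner N A B - frob_inner N A C"
  by (simp add: frob_inner_def right_diff_distrib sum_subtractf)

lemma sum_swap_first_last:
  "(\<Sum>i\<in>A. \<Sum>j\<in>B. \<Sum>l\<in>C. f i j l) = (\<Sum>l\<in>C. \<Sum>j\<in>B. \<Sum>i\<in>A. f i j l)"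
proof -
  have "(\<Sum>i\<in>A. \<Sum>j\<in>B. \<Sum>l\<in>C. f i j l) = (\<Sum>j\<in>B. \<Sum>i\<in>A. \<Sum>l\<in>C. f i j l)"
    by (rule sum.swap)
  also have "\<dots> = (\<Sum>j\<in>B. \<Sum>l\<in>C. \<Sum>i\<in>A. f i j l)"
    by (rule sum.cong[OF refl], rule sum.swap)
  also have "\<dots> = (\<Sum>l\<in>C. \<Sum>j\<in>B. \<Sum>i\<in>A. f i j l)"
    by (rule sum.swap)
  finally show ?thesis .
qed

lemma frob_inner_mult_left:
  assumes K: "skew_herm N K" and A: "A \<in> carrier_mat N N" and B: "B \<in> carrier_mat N N"
  shows "frob_inner N (K * A) B = - frob_inner N A (K * B)"
proof -
  have KC: "K \<in> carrier_mat N N"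
    using K by (rule skew_herm_carrier)
  have "frob_inner N (K * A) B = (\<Sum>i<N. \<Sum>j<N. \<Sum>l<N. - (K $$ (l,i) * cnj (A $$ (l,j)) * B $$ (i,j)))"
    using K KC A by (simp add: frob_inner_def scalar_prod_def atLeast0LessThan skew_herm_cnj_index
        sum_distrib_right)
  also have "\<dots> = (\<Sum>l<N. \<Sum>j<N. \<Sum>i<N. - (K $$ (l,i) * cnj (A $$ (l,j)) * B $$ (i,j)))"
    by (rule sum_swap_first_last)
  also have "\<dots> = - frob_inner N A (K * B)"
    using KC B by (simp add: frob_inner_def scalar_prod_def atLeast0LessThan sum_distrib_left
        sum_negf mult.commute mult.left_commute)
  finally show ?thesis .
qed

lemma frob_inner_mult_right:
  assumes K: "skew_herm N K" and A: "A \<in> carrier_mat N N" and B: "B \<in> carrier_mat N N"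
  shows "frob_inner N (A * K) B = - frob_inner N A (B * K)"
proof -
  have KC: "K \<in> carrier_mat N N"
    using K by (rule skew_herm_carrier)
  have "frob_inner N (A * K) B = (\<Sum>i<N. \<Sum>j<N. \<Sum>l<N. - (cnj (A $$ (i,l)) * K $$ (j,l) * B $$ (i,j)))"
    using K KC A by (simp add: frob_inner_def scalar_prod_def atLeast0LessThan skew_herm_cnj_index
        sum_distrib_left sum_distrib_right sum_negf mult.commute)
  also have "\<dots> = (\<Sum>i<N. \<Sum>l<N. \<Sum>j<N. - (cnj (A $$ (i,l)) * K $$ (j,l) * B $$ (i,j)))"
    by (rule sum.cong[OF refl], rule sum.swap)
  also have "\<dots> = - frob_inner N A (B * K)"
    using KC B by (simp add: frob_inner_def scalar_prod_def atLeast0LessThan sum_distrib_left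
        sum_negf mult.assoc mult.commute mult.left_commute)
  finally show ?thesis .
qed

lemma frob_inner_comm:
  assumes K: "skew_herm N K" and A: "A \<in> carrier_mat N N" and B: "B \<in> carrier_mat N N"
  shows "frob_inner N A (comm K B) = - frob_inner N (comm K A) B"
proof -
  have KC: "K \<in> carrier_mat N N"
    using K by (rule skew_herm_carrier)
  show ?thesis
    using KC A B
    by (simp add: comm_def frob_inner_diff_left frob_inner_diff_right[of _ N]
        frob_inner_mult_left[OF K] frob_inner_mult_right[OF K])
qed

lemma frob_inner_self:
  "frob_inner N Z Z = complex_of_real (\<Sum>i<N. \<Sum>j<N. (cmod (Z $$ (i,j)))\<^sup>2)"
  unfolding frob_inner_def of_real_sum complex_norm_square by (simp add: mult.commute)

lemma eq_zero_if_sum_sq_norms_eq_zero: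
  assumes Z: "Z \<in> carrier_mat N N" and sq: "(\<Sum>i<N. \<Sum>j<N. (cmod (Z $$ (i,j)))\<^sup>2) = 0"
  shows "Z = 0\<^sub>m N N"
proof (rule eq_matI)
  fix i j assume "i < dim_row (0\<^sub>m N N :: complex mat)" "j < dim_col (0\<^sub>m N N :: complex mat)"
  then have "i < N" "j < N" by simp_all
  with sq show "Z $$ (i,j) = 0\<^sub>m N N $$ (i,j)"
    by (simp add: sum_nonneg_eq_0_iff sum_nonneg)
qed (use Z in simp_all)

lemma comm_rho_eq_zero_if_Lap_eq_zero:
  assumes Y: "Y \<in> carrier_mat N N" and L: "Lap N Y = 0\<^sub>m N N"
  shows "comm (rho N a) Y = 0\<^sub>m N N"
proof -
  define S where "S a = (\<Sum>i<N. \<Sum>j<N. (cmod (comm (rho N a) Y $$ (i,j)))\<^sup>2)" for a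
  have S_nonneg: "S a \<ge> 0" for a
    by (simp add: S_def sum_nonneg)
  have pairing: "frob_inner N Y (comm (rho N a) (comm (rho N a) Y)) = - complex_of_real (S a)" for a
    using Y by (simp add: frob_inner_comm[OF rho_skew_herm] frob_inner_self S_def)
  have "- complex_of_real (S 1 + S 2 + S 3) = frob_inner N Y (Lap N Y)"
    using Y by (simp add: Lap_def frob_inner_add_right pairing del: One_nat_def)
  also have "\<dots> = 0"
    using L by (simp add: frob_inner_def)
  finally have "complex_of_real (S 1 + S 2 + S 3) = 0"
    by (simp only: neg_equal_0_iff_equal)
  then have "S 1 = 0 \<and> S 2 = 0 \<and> S 3 = 0"
    using S_nonneg[of 1] S_nonneg[of 2] S_nonneg[of 3] by (simp only: of_real_eq_0_iff) linarith
  then have "S a = 0"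
    using rho_other[of a N] by (cases "a = 1 \<or> a = 2") (auto simp: S_def)
  then show ?thesis
    using Y by (intro eq_zero_if_sum_sq_norms_eq_zero) (simp_all add: S_def)
qed

lemma diagonal_rho3: "diagonal_mat (rho N 3)"
  by (simp add: diagonal_mat_def index_rho3 index_J3)

lemma diagonal_if_comm_rho3_eq_zero:
  assumes Y: "Y \<in> carrier_mat N N" and c: "comm (rho N 3) Y = 0\<^sub>m N N"
  shows "diagonal_mat Y"
  unfolding diagonal_mat_def
proof (intro allI impI)
  fix i j assume "i < dim_row Y" "j < dim_col Y" "i \<noteq> j"
  then have ij: "i < N" "j < N" "i \<noteq> j"
    using Y by auto
  have "(rho N 3 $$ (i,i) - rho N 3 $$ (j,j)) * Y $$ (i,j) = 0"
    using index_comm_diagonal_left[OF rho_carrier Y diagonal_rho3 ij(1,2)] c ij by simp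
  moreover have "rho N 3 $$ (i,i) - rho N 3 $$ (j,j) = \<i> * complex_of_real (real i - real j)"
    using ij by (simp add: index_rho3 index_J3 weight_def algebra_simps)
  ultimately show "Y $$ (i,j) = 0"
    using ij by simp
qed

lemma diagonal_const_if_comm_rho1_eq_zero:
  assumes Y: "Y \<in> carrier_mat N N" "diagonal_mat Y" and c: "comm (rho N 1) Y = 0\<^sub>m N N"
    and "i < N"
  shows "Y $$ (i,i) = Y $$ (0,0)"
  using \<open>i < N\<close>
proof (induction i)
  case (Suc i)
  have "rho N 1 $$ (i, Suc i) * (Y $$ (Suc i, Suc i) - Y $$ (i,i)) = 0"
    using index_comm_diagonal_right[OF rho_carrier[of N 1] Y, of i "Suc i"] c Suc.prems by simp
  moreover have "rho N 1 $$ (i, Suc i) \<noteq> 0"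
    using ladder_coeff_nonzero[of "Suc i" N] Suc.prems
    by (simp add: index_rho1 index_Jplus index_Jminus del: One_nat_def)
  ultimately show ?case
    using Suc by simp
qed simp

lemma Lap_kernel_traceless:
  assumes Y: "Y \<in> carrier_mat N N" and tr: "mat_trace N Y = 0" and L: "Lap N Y = 0\<^sub>m N N"
  shows "Y = 0\<^sub>m N N"
proof -
  have diag: "diagonal_mat Y"
    using diagonal_if_comm_rho3_eq_zero[OF Y comm_rho_eq_zero_if_Lap_eq_zero[OF Y L]] .
  have const: "Y $$ (i,i) = Y $$ (0,0)" if "i < N" for i
    using diagonal_const_if_comm_rho1_eq_zero[OF Y diag comm_rho_eq_zero_if_Lap_eq_zero[OF Y L] that] .
  have "mat_trace N Y = (\<Sum>i<N. Y $$ (0,0))"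
    unfolding mat_trace_def by (rule sum.cong[OF refl], rule const) simp
  then have "of_nat N * Y $$ (0,0) = 0"
    using tr by simp
  then have "Y $$ (i,i) = 0" if "i < N" for i
    using const[OF that] that by simp
  then show ?thesis
    using Y diag by (intro eq_matI) (auto simp: diagonal_mat_def)
qed

lemma Lap_inj_on_traceless:
  assumes A: "A \<in> carrier_mat N N" and B: "B \<in> carrier_mat N N"
    and "mat_trace N A = 0" "mat_trace N B = 0" and "Lap N A = Lap N B"
  shows "A = B"
proof -
  have "Lap N (A - B) = 0\<^sub>m N N"
    using assms Lap_diff[OF A B] minus_r_inv_mat[OF Lap_carrier[OF B]] by simp
  then have AB: "A - B = 0\<^sub>m N N"
    by (rule Lap_kernel_traceless[rotated 2])
      (use assms in \<open>simp_all add: mat_trace_diff minus_carrier_mat\<close>)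
  have "A $$ (i,j) = B $$ (i,j)" if "i < N" "j < N" for i j
  proof -
    have "(A - B) $$ (i,j) = 0"
      using AB that by simp
    then show ?thesis
      using A B that by simp
  qed
  then show ?thesis
    using A B by (intro eq_matI) auto
qed

section \<open>Surjectivity by finite dimensionality\<close>

lemma (in vector_space) image_eq_if_inj_on_subspace:
  assumes lin: "Vector_Spaces.linear scale scale f" and V: "subspace V" "V \<subseteq> span W" "finite W"
    and maps: "f ` V \<subseteq> V" and inj: "inj_on f V"
  shows "f ` V = V"
proof
  interpret f: Vector_Spaces.linear scale scale f
    by (fact lin)
  obtain T where T: "T \<subseteq> V" "independent T" "V \<subseteq> span T"
    using basis_exists[of V] by metis
  have "finite T"
    using independent_span_bound[OF V(3) T(2)] T(1) V(2) by blast
  have span_T: "span T = V"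
    using T span_minimal[OF T(1) V(1)] by blast
  then have inj_T: "inj_on f (span T)"
    using inj by simp
  have card_fT: "card (f ` T) = card T"
    using card_image inj_on_subset[OF inj_T span_superset] by blast
  have "V \<subseteq> span (f ` T)"
  proof
    fix a assume "a \<in> V"
    show "a \<in> span (f ` T)"
    proof (rule ccontr)
      assume a: "a \<notin> span (f ` T)"
      then have "independent (insert a (f ` T))"
        using independent_insertI f.independent_injective_image[OF T(2) inj_T] by blast
      moreover have "insert a (f ` T) \<subseteq> span T"
        using \<open>a \<in> V\<close> T(1) maps span_T by blast
      ultimately have "card (insert a (f ` T)) \<le> card T"
        using independent_span_bound[OF \<open>finite T\<close>] by blast
      moreover have "a \<notin> f ` T"
        using a span_superset by blast
      then have "card (insert a (f ` T)) = card T + 1"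
        using \<open>finite T\<close> card_fT by simp
      ultimately show False
        by simp
    qed
  qed
  also have "span (f ` T) = f ` V"
    using f.span_image span_T by simp
  finally show "V \<subseteq> f ` V" .
qed (fact maps)

definition fun_scaleR :: "real \<Rightarrow> ('a \<Rightarrow> 'b::real_vector) \<Rightarrow> 'a \<Rightarrow> 'b" where
  "fun_scaleR r f = (\<lambda>x. r *\<^sub>R f x)"

global_interpretation fun_space: vector_space "fun_scaleR :: real \<Rightarrow> ('a \<Rightarrow> 'b::real_vector) \<Rightarrow> _"
  by unfold_locales (simp_all add: fun_scaleR_def fun_eq_iff scaleR_add_right scaleR_add_left)

lemma span_finite_support:
  fixes f :: "'a \<Rightarrow> complex"
  assumes "finite S" "\<And>x. x \<notin> S \<Longrightarrow> f x = 0"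
  shows "f \<in> fun_space.span ((\<lambda>p. 0(p := 1)) ` S \<union> (\<lambda>p. 0(p := \<i>)) ` S)"
  using assms
proof (induction S arbitrary: f rule: finite_induct)
  case empty
  then have "f = 0"
    by auto
  then show ?case
    using fun_space.span_zero by (simp add: zero_fun_def)
next
  case (insert p S)
  let ?B = "\<lambda>S. (\<lambda>p. 0(p := 1)) ` S \<union> (\<lambda>p. 0(p := \<i>)) ` S :: ('a \<Rightarrow> complex) set"
  have "f(p := 0) \<in> fun_space.span (?B S)"
    using insert by (intro insert.IH) auto
  then have "f(p := 0) \<in> fun_space.span (?B (insert p S))"
    by (rule set_mp[OF fun_space.span_mono, rotated]) auto
  moreover have "fun_scaleR (Re (f p)) (0(p := 1)) + fun_scaleR (Im (f p)) (0(p := \<i>))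
      \<in> fun_space.span (?B (insert p S))"
    by (intro fun_space.span_add fun_space.span_scale fun_space.span_base) auto
  ultimately have "f(p := 0) + (fun_scaleR (Re (f p)) (0(p := 1)) + fun_scaleR (Im (f p)) (0(p := \<i>)))
      \<in> fun_space.span (?B (insert p S))"
    by (rule fun_space.span_add)
  also have "f(p := 0) + (fun_scaleR (Re (f p)) (0(p := 1)) + fun_scaleR (Im (f p)) (0(p := \<i>))) = f"
    by (simp add: fun_eq_iff fun_scaleR_def complex_eq_iff)
  finally show ?case .
qed

text \<open>Matrices of different sizes do not form a vector space, so an \<open>N \<times> N\<close> matrix is
  replaced by its entry function, extended by zero outside the \<open>N \<times> N\<close> block.\<close>

definition mat_entries :: "nat \<Rightarrow> complex mat \<Rightarrow> nat \<times> nat \<Rightarrow> complex" where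
  "mat_entries N A = (\<lambda>(i,j). if i < N \<and> j < N then A $$ (i,j) else 0)"

lemma mat_mat_entries: "A \<in> carrier_mat N N \<Longrightarrow> mat N N (mat_entries N A) = A"
  by (intro eq_matI) (auto simp: mat_entries_def)

lemma inj_on_mat_entries: "inj_on (mat_entries N) (carrier_mat N N)"
  by (metis inj_onI mat_mat_entries)

lemma mat_entries_add:
  "A \<in> carrier_mat N N \<Longrightarrow> B \<in> carrier_mat N N \<Longrightarrow>
    mat_entries N (A + B) = mat_entries N A + mat_entries N B"
  by (auto simp: mat_entries_def fun_eq_iff)

lemma mat_entries_smult_real:
  "A \<in> carrier_mat N N \<Longrightarrow> mat_entries N (complex_of_real r \<cdot>\<^sub>m A) = fun_scaleR r (mat_entries N A)"
  by (auto simp: mat_entries_def fun_scaleR_def fun_eq_iff scaleR_conv_of_real)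

lemma mat_entries_in_span:
  "mat_entries N A \<in> fun_space.span
     ((\<lambda>p. 0(p := 1)) ` ({..<N} \<times> {..<N}) \<union> (\<lambda>p. 0(p := \<i>)) ` ({..<N} \<times> {..<N}))"
  by (auto intro!: span_finite_support simp: mat_entries_def split: if_splits)

lemma subspace_mat_entries_image:
  assumes "D \<subseteq> carrier_mat N N" "0\<^sub>m N N \<in> D"
    "\<And>A B. A \<in> D \<Longrightarrow> B \<in> D \<Longrightarrow> A + B \<in> D"
    "\<And>r A. A \<in> D \<Longrightarrow> complex_of_real r \<cdot>\<^sub>m A \<in> D"
  shows "fun_space.subspace (mat_entries N ` D)"
  unfolding fun_space.subspace_def
proof (intro conjI ballI allI)
  show "0 \<in> mat_entries N ` D"
    using assms(2) by (force simp: mat_entries_def zero_fun_def)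
  show "x + y \<in> mat_entries N ` D" if "x \<in> mat_entries N ` D" "y \<in> mat_entries N ` D" for x y
    using that assms by (auto simp: mat_entries_add[symmetric] subset_iff)
  show "fun_scaleR r x \<in> mat_entries N ` D" if "x \<in> mat_entries N ` D" for r x
    using that assms by (auto simp: mat_entries_smult_real[symmetric] subset_iff)
qed

lemma linear_mat_entries_conj:
  assumes "\<And>A B. A \<in> carrier_mat N N \<Longrightarrow> B \<in> carrier_mat N N \<Longrightarrow> L (A + B) = L A + L B"
    "\<And>r A. A \<in> carrier_mat N N \<Longrightarrow> L (complex_of_real r \<cdot>\<^sub>m A) = complex_of_real r \<cdot>\<^sub>m L A"
    "\<And>A. A \<in> carrier_mat N N \<Longrightarrow> L A \<in> carrier_mat N N"
  shows "Vector_Spaces.linear fun_scaleR fun_scaleR (\<lambda>g. mat_entries N (L (mat N N g)))"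
proof -
  have "mat N N (g + h) = mat N N g + mat N N h" for g h :: "nat \<times> nat \<Rightarrow> complex"
    by (intro eq_matI) auto
  moreover have "mat N N (fun_scaleR r g) = complex_of_real r \<cdot>\<^sub>m mat N N g" for r g
    by (intro eq_matI) (auto simp: fun_scaleR_def scaleR_conv_of_real)
  ultimately show ?thesis
    using assms
    by (simp add: Vector_Spaces.linear_iff fun_space.vector_space_axioms mat_entries_add
        mat_entries_smult_real)
qed

lemma real_linear_image_eq_if_inj_on:
  fixes L :: "complex mat \<Rightarrow> complex mat"
  assumes D: "D \<subseteq> carrier_mat N N" "0\<^sub>m N N \<in> D"
    "\<And>A B. A \<in> D \<Longrightarrow> B \<in> D \<Longrightarrow> A + B \<in> D"
    "\<And>r A. A \<in> D \<Longrightarrow> complex_of_real r \<cdot>\<^sub>m A \<in> D"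
    and L: "\<And>A B. A \<in> carrier_mat N N \<Longrightarrow> B \<in> carrier_mat N N \<Longrightarrow> L (A + B) = L A + L B"
    "\<And>r A. A \<in> carrier_mat N N \<Longrightarrow> L (complex_of_real r \<cdot>\<^sub>m A) = complex_of_real r \<cdot>\<^sub>m L A"
    "\<And>A. A \<in> carrier_mat N N \<Longrightarrow> L A \<in> carrier_mat N N"
    and maps: "L ` D \<subseteq> D" and inj: "inj_on L D"
  shows "L ` D = D"
proof -
  let ?F = "\<lambda>g. mat_entries N (L (mat N N g))"
  let ?S = "{..<N} \<times> {..<N}"
  have conj: "(?F \<circ> mat_entries N) A = (mat_entries N \<circ> L) A" if "A \<in> D" for A
    using that D(1) by (auto simp: mat_mat_entries)
  have F_image: "?F ` mat_entries N ` D = mat_entries N ` L ` D"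
    using conj by (simp add: image_comp cong: image_cong)
  have "inj_on (mat_entries N \<circ> L) D"
    using comp_inj_on[OF inj inj_on_subset[OF inj_on_mat_entries]] maps D(1) by blast
  then have "inj_on (?F \<circ> mat_entries N) D"
    using inj_on_cong[of D "?F \<circ> mat_entries N" "mat_entries N \<circ> L"] conj by blast
  then have inj_F: "inj_on ?F (mat_entries N ` D)"
    by (rule inj_on_imageI)
  have maps_F: "?F ` mat_entries N ` D \<subseteq> mat_entries N ` D"
    using F_image maps by (simp add: image_mono)
  have span: "mat_entries N ` D \<subseteq> fun_space.span ((\<lambda>p. 0(p := 1)) ` ?S \<union> (\<lambda>p. 0(p := \<i>)) ` ?S)"
    using mat_entries_in_span by blast
  have "?F ` mat_entries N ` D = mat_entries N ` D"
    using fun_space.image_eq_if_inj_on_subspace[OF linear_mat_entries_conj[OF L]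
        subspace_mat_entries_image[OF D] span _ maps_F inj_F] by simp
  then show ?thesis
    using inj_on_image_eq_iff[OF inj_on_mat_entries[of N], of "L ` D" D] maps D(1) F_image by auto
qed

section \<open>Bijectivity and the quantized Euler equations\<close>

lemma inj_on_Lap_DD0: "inj_on (Lap N) (DD0 N k)"
  by (rule inj_onI, rule Lap_inj_on_traceless) (auto simp: DD0_iff skew_herm_carrier)

lemma Lap_image_DD0: "Lap N ` DD0 N k = DD0 N k"
  by (rule real_linear_image_eq_if_inj_on[OF DD0_carrier zero_DD0 DD0_add DD0_smult_real
        Lap_add Lap_smult Lap_carrier _ inj_on_Lap_DD0]) (auto intro: Lap_DD0)

lemma LapInv_eqI:
  assumes "A \<in> su N" "Lap N A = W"
  shows "LapInv N W = A"
  unfolding LapInv_def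
proof (rule the_equality)
  show "A \<in> su N \<and> Lap N A = W"
    using assms by simp
  show "Y = A" if "Y \<in> su N \<and> Lap N Y = W" for Y
    using that assms Lap_inj_on_traceless[of Y N A] by (auto simp: su_def skew_herm_carrier)
qed

lemma brN_eq_smult_comm: "brN N A B = complex_of_real (real N powr (3/2)) \<cdot>\<^sub>m comm A B"
  by (simp add: brN_def comm_def)

theorem mainTheorem5:
  fixes N k :: nat
  assumes "N \<ge> 2" and "0 < k" and "k \<le> N"
  shows "(\<forall>A\<in>DD0 N k. \<forall>B\<in>DD0 N k. Lap N (A + B) = Lap N A + Lap N B)
       \<and> (\<forall>c::real. \<forall>A\<in>DD0 N k. Lap N (complex_of_real c \<cdot>\<^sub>m A) = complex_of_real c \<cdot>\<^sub>m Lap N A)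
       \<and> bij_betw (Lap N) (DD0 N k) (DD0 N k)
       \<and> (\<forall>W\<in>DD0 N k. brN N (LapInv N W) W \<in> DD0 N k)"
proof (intro conjI ballI allI)
  fix A B assume "A \<in> DD0 N k" "B \<in> DD0 N k"
  then show "Lap N (A + B) = Lap N A + Lap N B"
    by (simp add: Lap_add DD0_iff skew_herm_carrier)
next
  fix c :: real and A assume "A \<in> DD0 N k"
  then show "Lap N (complex_of_real c \<cdot>\<^sub>m A) = complex_of_real c \<cdot>\<^sub>m Lap N A"
    by (simp add: Lap_smult DD0_iff skew_herm_carrier)
next
  show "bij_betw (Lap N) (DD0 N k) (DD0 N k)"
    by (simp add: bij_betw_def inj_on_Lap_DD0 Lap_image_DD0)
next
  fix W assume "W \<in> DD0 N k"
  then obtain A where A: "A \<in> DD0 N k" "Lap N A = W"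
    using Lap_image_DD0 by (metis imageE)
  then have "LapInv N W = A"
    by (intro LapInv_eqI) (simp add: DD0_def)
  then show "brN N (LapInv N W) W \<in> DD0 N k"
    using A \<open>W \<in> DD0 N k\<close> by (simp add: brN_eq_smult_comm DD0_smult_real DD0_comm)
qed

end
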